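(* Let $G$ be a graph and $uv\in E(G)$. Then $d(G)\le d(G-uv)$, with equality if and only if $N_G[u]=N_G[v]$.
   Context: All graphs are finite, simple and undirected. A subset $D\subseteq V(G)$ is a dissociation set of $G$ if the induced subgraph $G[D]$ has maximum degree at most $1$; the empty set is a dissociation set. $d(G)$ denotes the total number of dissociation sets of $G$, including the empty set. $G-uv$ is the graph obtained from $G$ by deleting the edge $uv$ while keeping all vertices. $N_G[x]$ denotes the closed neighborhood of $x$ in $G$. *)

theory Defs
  imports Main
begin

definition simple_graph :: "'a set \<Rightarrow> 'a set set \<Rightarrow> bool" where
  "simple_graph V E \<longleftrightarrow> finite V \<and> (\<forall>e\<in>E. e \<subseteq> V \<and> card e = 2)"

definition adj :: "'a set set \<Rightarrow> 'a \<Rightarrow> 'a \<Rightarrow> bool" where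
  "adj E x y \<longleftrightarrow> {x, y} \<in> E"

definition dissociation_set :: "'a set \<Rightarrow> 'a set set \<Rightarrow> 'a set \<Rightarrow> bool" where
  "dissociation_set V E D \<longleftrightarrow> D \<subseteq> V \<and> (\<forall>x\<in>D. card {y\<in>D. adj E x y} \<le> 1)"

definition num_diss :: "'a set \<Rightarrow> 'a set set \<Rightarrow> nat" where
  "num_diss V E = card {D. dissociation_set V E D}"

definition closed_nbhd :: "'a set \<Rightarrow> 'a set set \<Rightarrow> 'a \<Rightarrow> 'a set" where
  "closed_nbhd V E x = {y\<in>V. adj E x y} \<union> {x}"

end

theory Submission
  imports Defs
begin

text \<open>Deleting an edge only removes adjacencies, so every dissociation set of \<open>G\<close> is one of
  \<open>G - uv\<close>. A dissociation set of \<open>G - uv\<close> fails in \<open>G\<close> exactly when it contains \<open>u\<close>, \<open>v\<close>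
  and a further neighbour of one of them; such a set exists iff \<open>u\<close> or \<open>v\<close> has a neighbour
  outside the other's closed neighbourhood.\<close>

lemma adj_irrefl: "simple_graph V E \<Longrightarrow> \<not> adj E x x"
  unfolding adj_def simple_graph_def by force

lemma dissociation_set_iff:
  assumes "finite V"
  shows "dissociation_set V E D \<longleftrightarrow>
    D \<subseteq> V \<and> (\<forall>x\<in>D. \<forall>y\<in>D. \<forall>z\<in>D. adj E x y \<longrightarrow> adj E x z \<longrightarrow> y = z)"
proof -
  have "finite {y\<in>D. adj E x y}" if "D \<subseteq> V" for x
    using assms that by (auto intro: finite_subset)
  then show ?thesis
    unfolding dissociation_set_def One_nat_def by (auto simp: card_le_Suc0_iff_eq)
qed

lemma dissociation_set_Diff_edges:
  assumes "finite V" "dissociation_set V E D"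
  shows "dissociation_set V (E - X) D"
  using assms unfolding dissociation_set_iff[OF assms(1)] adj_def by blast

lemma finite_dissociation_sets:
  "finite V \<Longrightarrow> finite {D. dissociation_set V E D}"
  by (rule finite_subset[of _ "Pow V"]) (auto simp: dissociation_set_def)

lemma num_diss_Diff_edges_mono:
  assumes "finite V"
  shows "num_diss V E \<le> num_diss V (E - X)"
  unfolding num_diss_def using assms
  by (intro card_mono finite_dissociation_sets) (auto intro: dissociation_set_Diff_edges)

lemma num_diss_Diff_edges_eq_iff:
  assumes "finite V"
  shows "num_diss V E = num_diss V (E - X) \<longleftrightarrow>
    (\<forall>D. dissociation_set V (E - X) D \<longrightarrow> dissociation_set V E D)"
proof -
  have sub: "{D. dissociation_set V E D} \<subseteq> {D. dissociation_set V (E - X) D}"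
    using dissociation_set_Diff_edges[OF assms] by blast
  have "num_diss V E = num_diss V (E - X) \<longleftrightarrow>
      {D. dissociation_set V E D} = {D. dissociation_set V (E - X) D}"
    unfolding num_diss_def
    using card_subset_eq[OF finite_dissociation_sets[OF assms] sub] by auto
  with sub show ?thesis by blast
qed

lemma private_neighbour_dissociation_set:
  assumes G: "simple_graph V E" and e: "{u, v} \<in> E" and w: "w \<in> V" "adj E u w"
    and vw: "\<not> adj E v w" "w \<noteq> v"
  shows "dissociation_set V (E - {{u, v}}) {u, v, w} \<and> \<not> dissociation_set V E {u, v, w}"
proof -
  have finV: "finite V" using G by (simp add: simple_graph_def)
  have uV: "u \<in> V" "v \<in> V" using G e by (auto simp: simple_graph_def)
  have "\<not> adj E x x" for x using adj_irrefl[OF G] .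
  then have "dissociation_set V (E - {{u, v}}) {u, v, w}"
    using uV w vw unfolding dissociation_set_iff[OF finV] adj_def
    by (auto simp: insert_commute)
  moreover have "\<not> dissociation_set V E {u, v, w}"
    using e w vw unfolding dissociation_set_iff[OF finV] adj_def by blast
  ultimately show ?thesis by blast
qed

lemma closed_nbhd_neq_obtains_dissociation_set:
  assumes G: "simple_graph V E" and e: "{u, v} \<in> E"
    and ne: "closed_nbhd V E u \<noteq> closed_nbhd V E v"
  obtains D where "dissociation_set V (E - {{u, v}}) D" "\<not> dissociation_set V E D"
proof -
  have uv: "adj E u v" "adj E v u" using e by (auto simp: adj_def insert_commute)
  have uV: "u \<in> V" "v \<in> V" using G e by (auto simp: simple_graph_def)
  obtain a b w where ab: "{a, b} = {u, v}" and w: "w \<in> V" "adj E a w" "\<not> adj E b w" "w \<noteq> b"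
  proof -
    from ne obtain w where "w \<in> closed_nbhd V E u \<and> w \<notin> closed_nbhd V E v \<or>
        w \<in> closed_nbhd V E v \<and> w \<notin> closed_nbhd V E u"
      by blast
    then show ?thesis
    proof
      assume "w \<in> closed_nbhd V E u \<and> w \<notin> closed_nbhd V E v"
      then show ?thesis using that[of u v w] uv uV by (auto simp: closed_nbhd_def)
    next
      assume "w \<in> closed_nbhd V E v \<and> w \<notin> closed_nbhd V E u"
      then show ?thesis using that[of v u w] uv uV by (auto simp: closed_nbhd_def insert_commute)
    qed
  qed
  have "{a, b} \<in> E" using ab e by simp
  from private_neighbour_dissociation_set[OF G this w] ab that show ?thesis by metis
qed

text \<open>With \<open>N[u] = N[v]\<close>, a second neighbour \<open>z\<close> of an endpoint of \<open>uv\<close> is a common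
  neighbour of \<open>u\<close> and \<open>v\<close>, so it keeps degree two after deleting \<open>uv\<close>.\<close>
lemma closed_nbhd_eq_dissociation_set:
  assumes G: "simple_graph V E" and e: "{u, v} \<in> E"
    and N: "closed_nbhd V E u = closed_nbhd V E v"
    and D: "dissociation_set V (E - {{u, v}}) D"
  shows "dissociation_set V E D"
proof -
  have finV: "finite V" using G by (simp add: simple_graph_def)
  have DV: "D \<subseteq> V" using D by (simp add: dissociation_set_def)
  have uv: "u \<noteq> v" using G e by (fastforce simp: simple_graph_def)
  have D': "b = c" if "a \<in> D" "b \<in> D" "c \<in> D"
    "adj (E - {{u, v}}) a b" "adj (E - {{u, v}}) a c" for a b c
    using D that unfolding dissociation_set_iff[OF finV] by blast
  have no_second_nbr: False
    if "x \<in> D" "y \<in> D" "z \<in> D" "{x, y} = {u, v}" "adj E x z" "z \<noteq> y" for x y z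
  proof -
    have uvD: "u \<in> D" "v \<in> D" using that(1,2,4) by (auto simp: doubleton_eq_iff)
    have "z \<noteq> x" using that(5) adj_irrefl[OF G] by blast
    then have z: "z \<noteq> u" "z \<noteq> v" using that(4,6) by (auto simp: doubleton_eq_iff)
    have "z \<in> closed_nbhd V E x" using that(3,5) DV by (auto simp: closed_nbhd_def)
    then have "adj E u z" "adj E v z"
      using N that(4) z by (auto simp: closed_nbhd_def doubleton_eq_iff)
    then have "adj (E - {{u, v}}) z u" "adj (E - {{u, v}}) z v"
      using z by (auto simp: adj_def insert_commute doubleton_eq_iff)
    then show False using D'[OF that(3) uvD] uv by blast
  qed
  show ?thesis
    unfolding dissociation_set_iff[OF finV]
  proof (intro conjI DV ballI impI)
    fix x y z assume xyz: "x \<in> D" "y \<in> D" "z \<in> D" "adj E x y" "adj E x z"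
    show "y = z"
    proof (rule ccontr)
      assume yz: "y \<noteq> z"
      then have "\<not> (adj (E - {{u, v}}) x y \<and> adj (E - {{u, v}}) x z)"
        using D' xyz(1-3) by blast
      then have "{x, y} = {u, v} \<or> {x, z} = {u, v}"
        using xyz(4,5) unfolding adj_def by blast
      then show False
        using no_second_nbr[OF xyz(1-3) _ xyz(5) yz[symmetric]]
          no_second_nbr[OF xyz(1,3,2) _ xyz(4) yz] by blast
    qed
  qed
qed

theorem lemma2p5:
  fixes V :: "'a set" and E :: "'a set set" and u v :: 'a
  assumes "simple_graph V E" and "{u, v} \<in> E"
  shows "num_diss V E \<le> num_diss V (E - {{u, v}})
    \<and> (num_diss V E = num_diss V (E - {{u, v}})
         \<longleftrightarrow> closed_nbhd V E u = closed_nbhd V E v)"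
proof -
  have finV: "finite V" using assms(1) by (simp add: simple_graph_def)
  have "num_diss V E = num_diss V (E - {{u, v}}) \<longleftrightarrow>
      closed_nbhd V E u = closed_nbhd V E v"
    unfolding num_diss_Diff_edges_eq_iff[OF finV]
    using closed_nbhd_eq_dissociation_set[OF assms]
      closed_nbhd_neq_obtains_dissociation_set[OF assms] by metis
  with num_diss_Diff_edges_mono[OF finV] show ?thesis by blast
qed

end
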